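(* Let $j$ be an integer, let $[a,b]=[2^j,2^{j+1}]$, let $n>1$ be an integer, and let $s_1,\dots,s_n$ and $w_1,\dots,w_n$ be the nodes and weights of the $n$-point Gauss–Legendre quadrature on $[a,b]$. Then for $\beta\in(1,2)$ and every $t>0$, $$\left|\int_a^b e^{-ts}s^{\beta-1}\,ds-\sum_{k=1}^n w_k s_k^{\beta-1}e^{-s_k t}\right|<2^{\beta-\frac{3}{2}}\,\pi\, a^\beta\left(\frac{e^{1/e}}{4}\right)^{2n}.$$
   Context: The $n$-point Gauss–Legendre quadrature on $[a,b]$ is the quadrature rule $\int_a^b \phi(s)\,ds\approx\sum_{k=1}^n w_k\phi(s_k)$ that is exact for all polynomials of degree at most $2n-1$. *)

theory Defs
  imports "HOL-Analysis.Analysis" "HOL-Computational_Algebra.Polynomial"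
begin

definition gauss_legendre :: "real \<Rightarrow> real \<Rightarrow> nat \<Rightarrow> (nat \<Rightarrow> real) \<Rightarrow> (nat \<Rightarrow> real) \<Rightarrow> bool" where
  "gauss_legendre a b n s w \<longleftrightarrow>
     (\<forall>p :: real poly. degree p \<le> 2 * n - 1 \<longrightarrow>
        integral {a..b} (poly p) = (\<Sum>k = 1..n. w k * poly p (s k)))"

end

theory Submission
  imports Defs
begin

text \<open>Interpolate f(x) = exp(-tx) x^(\<beta>-1) at the 2n Chebyshev points of [a,b]. By the Leibniz
  rule |f^(m)(x)| \<le> m! x^(\<beta>-1-m): the falling factorials of \<beta>-1 are bounded by factorials, and
  what remains is a partial sum of exp(tx), which cancels exp(-tx). Hence the Rolle-type
  interpolation remainder gives |f - P| \<le> 2 a^(\<beta>-1-2n) ((b-a)/4)^(2n) on [a,b]. The Gauss-Legendre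
  rule integrates P (degree < 2n) exactly and its weights are positive with sum b-a, so its error
  is at most 2(b-a) times that bound. For b = 2a this is 4 a^\<beta> / 16^n, which is below the claimed
  bound because 2^(\<beta>-3/2) \<pi> e^(2n/e) > 4.\<close>

lemma sum_binomial_Pascal:
  fixes A :: "nat \<Rightarrow> nat \<Rightarrow> real"
  shows "(\<Sum>i\<le>k. real (k choose i) * (A (Suc i) (k - i) + A i (Suc k - i)))
       = (\<Sum>i\<le>Suc k. real (Suc k choose i) * A i (Suc k - i))"
proof -
  have "(\<Sum>i\<le>k. real (k choose i) * A i (Suc k - i))
      = (\<Sum>i\<le>Suc k. real (k choose i) * A i (Suc k - i))"
    by simp
  also have "\<dots> = A 0 (Suc k) + (\<Sum>i\<le>k. real (k choose Suc i) * A (Suc i) (Suc k - Suc i))"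
    by (subst sum.atMost_Suc_shift) simp
  finally have "(\<Sum>i\<le>k. real (k choose i) * A i (Suc k - i))
      = A 0 (Suc k) + (\<Sum>i\<le>k. real (k choose Suc i) * A (Suc i) (Suc k - Suc i))" .
  moreover have "(\<Sum>i\<le>Suc k. real (Suc k choose i) * A i (Suc k - i))
      = A 0 (Suc k) + (\<Sum>i\<le>k. real (Suc k choose Suc i) * A (Suc i) (k - i))"
    by (subst sum.atMost_Suc_shift) simp
  ultimately show ?thesis
    by (simp add: sum.distrib algebra_simps)
qed

lemma Leibniz_has_real_derivative:
  fixes u v :: "nat \<Rightarrow> real \<Rightarrow> real"
  assumes du: "\<And>j. (u j has_real_derivative u (Suc j) x) (at x)"
    and dv: "\<And>j. (v j has_real_derivative v (Suc j) x) (at x)"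
  shows "((\<lambda>y. \<Sum>i\<le>k. real (k choose i) * u i y * v (k - i) y) has_real_derivative
          (\<Sum>i\<le>Suc k. real (Suc k choose i) * u i x * v (Suc k - i) x)) (at x)"
proof -
  have "((\<lambda>y. \<Sum>i\<le>k. real (k choose i) * u i y * v (k - i) y) has_real_derivative
          (\<Sum>i\<le>k. real (k choose i) * (u (Suc i) x * v (k - i) x + u i x * v (Suc k - i) x))) (at x)"
    by (intro DERIV_sum) (auto simp: mult.assoc Suc_diff_le intro!: DERIV_cmult DERIV_mult'[OF du dv, THEN DERIV_cong])
  also have "(\<Sum>i\<le>k. real (k choose i) * (u (Suc i) x * v (k - i) x + u i x * v (Suc k - i) x))
     = (\<Sum>i\<le>Suc k. real (Suc k choose i) * u i x * v (Suc k - i) x)"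
    using sum_binomial_Pascal[of k "\<lambda>i j. u i x * v j x"] by (simp add: mult.assoc)
  finally show ?thesis .
qed

definition falling_fact :: "real \<Rightarrow> nat \<Rightarrow> real" where
  "falling_fact g j = (\<Prod>l<j. g - real l)"

lemma abs_falling_fact_le_fact:
  assumes "\<bar>g\<bar> \<le> 1"
  shows "\<bar>falling_fact g j\<bar> \<le> fact j"
proof -
  have "\<bar>falling_fact g j\<bar> = (\<Prod>l<j. \<bar>g - real l\<bar>)"
    by (simp add: falling_fact_def abs_prod)
  also have "\<dots> \<le> (\<Prod>l<j. real (Suc l))"
    by (rule prod_mono) (use assms in auto)
  also have "\<dots> = fact j"
    by (simp add: fact_prod_Suc atLeast0LessThan)
  finally show ?thesis .
qed

definition exp_powr_deriv :: "real \<Rightarrow> real \<Rightarrow> nat \<Rightarrow> real \<Rightarrow> real" where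
  "exp_powr_deriv t g k y = (\<Sum>i\<le>k. real (k choose i) * ((-t)^i * exp (-t*y))
      * (falling_fact g (k-i) * y powr (g - real (k-i))))"

lemma exp_powr_deriv_0: "exp_powr_deriv t g 0 y = exp (-t*y) * y powr g"
  by (simp add: exp_powr_deriv_def falling_fact_def)

lemma exp_powr_deriv_has_real_derivative:
  assumes "y > 0"
  shows "(exp_powr_deriv t g k has_real_derivative exp_powr_deriv t g (Suc k) y) (at y)"
proof -
  have du: "((\<lambda>y. (-t)^j * exp (-t*y)) has_real_derivative (-t)^(Suc j) * exp (-t*y)) (at y)" for j
    by (auto intro!: derivative_eq_intros)
  have dv: "((\<lambda>y. falling_fact g j * y powr (g - real j)) has_real_derivative
      falling_fact g (Suc j) * y powr (g - real (Suc j))) (at y)" for j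
    using assms
    by (auto intro!: derivative_eq_intros has_real_derivative_powr[THEN DERIV_cong]
        simp: falling_fact_def algebra_simps)
  show ?thesis
    unfolding exp_powr_deriv_def using Leibniz_has_real_derivative[of "\<lambda>j y. (-t)^j * exp (-t*y)" y
        "\<lambda>j y. falling_fact g j * y powr (g - real j)" k, OF du dv]
    by simp
qed

lemma exp_partial_sum_le:
  assumes "x \<ge> 0"
  shows "(\<Sum>i\<le>k. x^i / fact i) \<le> exp (x::real)"
  using assms summable_exp_generic[of x]
  by (auto simp: exp_def divide_inverse ac_simps intro!: sum_le_suminf)

lemma abs_exp_powr_deriv_le:
  assumes "\<bar>g\<bar> \<le> 1" "t \<ge> 0" "y > 0"
  shows "\<bar>exp_powr_deriv t g k y\<bar> \<le> fact k * y powr (g - real k)"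
proof -
  have term_le: "\<bar>real (k choose i) * ((-t)^i * exp (-t*y)) * (falling_fact g (k-i) * y powr (g - real (k-i)))\<bar>
      \<le> fact k * y powr (g - real k) * exp (-t*y) * ((t*y)^i / fact i)" if "i \<le> k" for i
  proof -
    have "y powr (g - real (k-i)) = y powr (g - real k) * y^i"
      using that assms by (simp add: of_nat_diff powr_add[symmetric] powr_realpow[symmetric] algebra_simps)
    then have "\<bar>real (k choose i) * ((-t)^i * exp (-t*y)) * (falling_fact g (k-i) * y powr (g - real (k-i)))\<bar>
        = real (k choose i) * (t^i * exp (-t*y)) * (\<bar>falling_fact g (k-i)\<bar> * (y powr (g - real k) * y^i))"
      using assms by (simp add: abs_mult power_abs)
    also have "\<dots> \<le> real (k choose i) * (t^i * exp (-t*y)) * (fact (k-i) * (y powr (g - real k) * y^i))"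
      by (intro mult_left_mono mult_right_mono abs_falling_fact_le_fact) (use assms in auto)
    also have "\<dots> = fact k * y powr (g - real k) * exp (-t*y) * ((t*y)^i / fact i)"
      using that by (simp add: binomial_fact power_mult_distrib field_simps)
    finally show ?thesis .
  qed
  have "\<bar>exp_powr_deriv t g k y\<bar>
      \<le> (\<Sum>i\<le>k. fact k * y powr (g - real k) * exp (-t*y) * ((t*y)^i / fact i))"
    unfolding exp_powr_deriv_def by (rule order_trans[OF sum_abs sum_mono]) (rule term_le, simp)
  also have "\<dots> = fact k * y powr (g - real k) * exp (-t*y) * (\<Sum>i\<le>k. (t*y)^i / fact i)"
    by (simp add: sum_distrib_left)
  also have "\<dots> \<le> fact k * y powr (g - real k) * exp (-t*y) * exp (t*y)"
    by (intro mult_left_mono exp_partial_sum_le) (use assms in auto)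
  also have "\<dots> = fact k * y powr (g - real k)"
    by (simp add: mult.assoc exp_add[symmetric])
  finally show ?thesis .
qed

lemma Rolle_zeros_of_derivative:
  fixes f f' :: "real \<Rightarrow> real"
  assumes der: "\<forall>x\<in>{a..b}. (f has_real_derivative f' x) (at x)"
  shows "finite Z \<Longrightarrow> card Z = Suc k \<Longrightarrow> Z \<subseteq> {a..b} \<Longrightarrow> \<forall>z\<in>Z. f z = 0 \<Longrightarrow>
    \<exists>Z'. finite Z' \<and> card Z' = k \<and> Z' \<subseteq> {Min Z..Max Z} \<and> (\<forall>z\<in>Z'. f' z = 0)"
proof (induction k arbitrary: Z)
  case 0
  then show ?case by (intro exI[of _ "{}"]) auto
next
  case (Suc k)
  \<comment> \<open>Rolle between the two largest zeros gives a zero of \<open>f'\<close> beyond those of the induction.\<close>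
  define M where "M = Max Z"
  define Z0 where "Z0 = Z - {M}"
  have MZ: "M \<in> Z" unfolding M_def using Suc.prems by (intro Max_in) auto
  have Z0: "finite Z0" "card Z0 = Suc k" "Z0 \<subseteq> {a..b}" "\<forall>z\<in>Z0. f z = 0"
    unfolding Z0_def using Suc.prems MZ by auto
  obtain Z0' where Z0': "finite Z0'" "card Z0' = k" "Z0' \<subseteq> {Min Z0..Max Z0}" "\<forall>z\<in>Z0'. f' z = 0"
    using Suc.IH[OF Z0] by blast
  define M0 where "M0 = Max Z0"
  have M0Z0: "M0 \<in> Z0" unfolding M0_def using Z0 by (intro Max_in) auto
  then have "M0 \<in> Z" "M0 \<noteq> M" unfolding Z0_def by auto
  then have M0M: "M0 < M" using Suc.prems unfolding M_def by (simp add: order_neq_le_trans)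
  have sub: "{M0..M} \<subseteq> {a..b}" using \<open>M0 \<in> Z\<close> MZ Suc.prems(3) by auto
  have "\<exists>z. M0 < z \<and> z < M \<and> DERIV f z :> 0"
  proof (rule Rolle[OF M0M])
    show "f M0 = f M" using \<open>M0 \<in> Z\<close> MZ Suc.prems(4) by auto
    show "continuous_on {M0..M} f"
      by (rule continuous_at_imp_continuous_on) (use der sub in \<open>blast intro: DERIV_isCont\<close>)
    show "f differentiable (at x)" if "M0 < x" "x < M" for x
      unfolding real_differentiable_def using der sub that by auto
  qed
  then obtain \<xi> where \<xi>: "M0 < \<xi>" "\<xi> < M" "DERIV f \<xi> :> 0" by blast
  have "f' \<xi> = 0" using der sub \<xi> DERIV_unique[OF \<xi>(3)] by force
  have "Min Z \<le> Min Z0"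
    using Z0 Suc.prems unfolding Z0_def by (auto intro: Min_antimono)
  then have Z0'sub: "Z0' \<subseteq> {Min Z..M0}" using Z0'(3) unfolding M0_def by auto
  then have "\<xi> \<notin> Z0'" using \<xi> by auto
  moreover have "Min Z \<le> M0" using \<open>M0 \<in> Z\<close> Suc.prems(1) by simp
  ultimately show ?case
    using Z0' Z0'sub \<xi> \<open>f' \<xi> = 0\<close> by (intro exI[of _ "insert \<xi> Z0'"]) (auto simp: M_def)
qed

lemma Rolle_iterated:
  fixes D :: "nat \<Rightarrow> real \<Rightarrow> real"
  assumes der: "\<forall>k<m. \<forall>x\<in>{a..b}. (D k has_real_derivative D (Suc k) x) (at x)"
    and Z: "finite Z" "card Z = Suc m" "Z \<subseteq> {a..b}" "\<forall>z\<in>Z. D 0 z = 0"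
  shows "\<exists>\<xi>\<in>{a..b}. D m \<xi> = 0"
proof -
  have "j \<le> m \<Longrightarrow> \<exists>Z. finite Z \<and> card Z = Suc m - j \<and> Z \<subseteq> {a..b} \<and> (\<forall>z\<in>Z. D j z = 0)" for j
  proof (induction j)
    case 0
    then show ?case using Z by auto
  next
    case (Suc j)
    then obtain Zj where Zj: "finite Zj" "card Zj = Suc (m - j)" "Zj \<subseteq> {a..b}" "\<forall>z\<in>Zj. D j z = 0"
      by (auto simp: Suc_diff_le)
    obtain Z' where Z': "finite Z'" "card Z' = m - j" "Z' \<subseteq> {Min Zj..Max Zj}" "\<forall>z\<in>Z'. D (Suc j) z = 0"
      using Rolle_zeros_of_derivative[of a b "D j" "D (Suc j)", OF _ Zj] der Suc.prems by auto
    have "Zj \<noteq> {}" using Zj(2) by auto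
    then have "{Min Zj..Max Zj} \<subseteq> {a..b}" using Zj(1,3) Min_in Max_in by fastforce
    then show ?case using Z' by (intro exI[of _ Z']) auto
  qed
  from this[of m] obtain Zm where "card Zm = 1" "Zm \<subseteq> {a..b}" "\<forall>z\<in>Zm. D m z = 0" by auto
  then show ?thesis by (metis One_nat_def card_1_singletonE insert_subset singletonI)
qed

lemma higher_pderiv_eq_0:
  fixes p :: "'a::{comm_semiring_1,semiring_no_zero_divisors,semiring_char_0} poly"
  assumes "degree p < k"
  shows "(pderiv ^^ k) p = 0"
  using assms by (intro poly_eqI) (simp add: coeff_higher_pderiv coeff_eq_0)

lemma poly_higher_pderiv_degree:
  fixes p :: "real poly"
  assumes "degree p = k"
  shows "poly ((pderiv ^^ k) p) y = lead_coeff p * fact k"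
proof -
  have "(pderiv ^^ k) p = [:lead_coeff p * fact k:]"
  proof (rule poly_eqI)
    fix i
    show "coeff ((pderiv ^^ k) p) i = coeff [:lead_coeff p * fact k:] i"
      using assms by (cases i) (simp_all add: coeff_higher_pderiv coeff_eq_0 pochhammer_fact)
  qed
  then show ?thesis by simp
qed

lemma interpolation_remainder:
  fixes F :: "nat \<Rightarrow> real \<Rightarrow> real" and P W :: "real poly"
  assumes der: "\<forall>k<m. \<forall>x\<in>{a..b}. (F k has_real_derivative F (Suc k) x) (at x)"
    and X: "finite X" "card X = m" "X \<subseteq> {a..b}"
    and P: "degree P < m" "\<forall>z\<in>X. poly P z = F 0 z"
    and W: "degree W = m" "\<forall>z\<in>X. poly W z = 0"
    and x: "x \<in> {a..b}"
  shows "\<exists>\<xi>\<in>{a..b}. F 0 x - poly P x = F m \<xi> / (lead_coeff W * fact m) * poly W x"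
proof (cases "x \<in> X")
  case True
  then show ?thesis using P W x by auto
next
  case False
  have W0: "W \<noteq> 0" using W P by auto
  have Wx: "poly W x \<noteq> 0"
  proof
    assume "poly W x = 0"
    then have "insert x X \<subseteq> {y. poly W y = 0}" using W by auto
    then have "card (insert x X) \<le> card {y. poly W y = 0}"
      using poly_roots_finite[OF W0] by (rule card_mono[rotated])
    also have "\<dots> \<le> m" using card_poly_roots_bound[OF W0] W by simp
    finally show False using False X by simp
  qed
  define K where "K = (F 0 x - poly P x) / poly W x"
  define D where "D k y = F k y - poly ((pderiv ^^ k) P) y - K * poly ((pderiv ^^ k) W) y" for k y
  have "\<forall>k<m. \<forall>y\<in>{a..b}. (D k has_real_derivative D (Suc k) y) (at y)"
    using der unfolding D_def[abs_def] by (auto intro!: derivative_eq_intros poly_DERIV)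
  moreover have "finite (insert x X)" "card (insert x X) = Suc m" "insert x X \<subseteq> {a..b}"
    "\<forall>z\<in>insert x X. D 0 z = 0"
    using X P W False x Wx by (auto simp: D_def K_def)
  ultimately obtain \<xi> where \<xi>: "\<xi> \<in> {a..b}" "D m \<xi> = 0" using Rolle_iterated by blast
  then have "F m \<xi> = K * (lead_coeff W * fact m)"
    unfolding D_def by (simp add: higher_pderiv_eq_0[OF P(1)] poly_higher_pderiv_degree[OF W(1)])
  then show ?thesis
    using \<xi>(1) Wx W0 by (intro bexI[of _ \<xi>]) (auto simp: K_def)
qed

definition lagrange_poly :: "real set \<Rightarrow> (real \<Rightarrow> real) \<Rightarrow> real poly" where
  "lagrange_poly X f = (\<Sum>x\<in>X. smult (f x / (\<Prod>z\<in>X-{x}. x - z)) (\<Prod>z\<in>X-{x}. [:-z, 1:]))"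

lemma poly_lagrange_poly:
  assumes "finite X" "x0 \<in> X"
  shows "poly (lagrange_poly X f) x0 = f x0"
proof -
  have "poly (lagrange_poly X f) x0 = (\<Sum>x\<in>X. f x / (\<Prod>z\<in>X-{x}. x - z) * (\<Prod>z\<in>X-{x}. x0 - z))"
    by (simp add: lagrange_poly_def poly_sum poly_prod)
  also have "\<dots> = f x0 / (\<Prod>z\<in>X-{x0}. x0 - z) * (\<Prod>z\<in>X-{x0}. x0 - z)"
    using assms by (intro sum.remove[THEN trans]) (auto intro!: sum.neutral prod_zero)
  also have "\<dots> = f x0"
    using assms by simp
  finally show ?thesis .
qed

lemma degree_lagrange_poly:
  assumes "finite X"
  shows "degree (lagrange_poly X f) \<le> card X - 1"
  unfolding lagrange_poly_def
proof (rule degree_sum_le[OF assms])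
  fix x assume x: "x \<in> X"
  have "degree (smult (f x / (\<Prod>z\<in>X-{x}. x - z)) (\<Prod>z\<in>X-{x}. [:-z, 1:]))
      \<le> degree (\<Prod>z\<in>X-{x}. [:-z, 1::real:])"
    by (rule degree_smult_le)
  also have "\<dots> \<le> sum (degree \<circ> (\<lambda>z. [:-z, 1::real:])) (X-{x})"
    by (rule degree_prod_sum_le) (use assms in auto)
  also have "\<dots> = card X - 1" using assms x by simp
  finally show "degree (smult (f x / (\<Prod>z\<in>X-{x}. x - z)) (\<Prod>z\<in>X-{x}. [:-z, 1:])) \<le> card X - 1" .
qed

fun chebyshev :: "nat \<Rightarrow> real poly" where
  "chebyshev 0 = 1"
| "chebyshev (Suc 0) = [:0, 1:]"
| "chebyshev (Suc (Suc k)) = pCons 0 (smult 2 (chebyshev (Suc k))) - chebyshev k"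

lemma poly_chebyshev_cos: "poly (chebyshev k) (cos \<theta>) = cos (real k * \<theta>)"
proof (induction k rule: chebyshev.induct)
  case (3 k)
  have "cos (real (Suc (Suc k)) * \<theta>) = cos (real (Suc k) * \<theta> + \<theta>)"
    and "cos (real k * \<theta>) = cos (real (Suc k) * \<theta> - \<theta>)"
    by (simp_all add: algebra_simps)
  with 3 show ?case
    by (simp only: chebyshev.simps poly_pCons poly_smult poly_diff cos_add cos_diff)
      (simp add: algebra_simps)
qed simp_all

lemma degree_coeff_chebyshev:
  "degree (chebyshev k) \<le> k \<and> coeff (chebyshev k) k = (if k = 0 then 1 else 2^(k-1))"
proof (induction k rule: chebyshev.induct)
  case (3 k)
  have "degree (pCons 0 (smult 2 (chebyshev (Suc k)))) \<le> Suc (Suc k)"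
    using 3 by (metis Suc_le_mono degree_pCons_le degree_smult_le le_trans)
  then have "degree (chebyshev (Suc (Suc k))) \<le> Suc (Suc k)"
    using 3 by (simp add: degree_diff_le)
  moreover have "coeff (chebyshev k) (Suc (Suc k)) = 0"
    using 3 by (intro coeff_eq_0) auto
  ultimately show ?case using 3 by simp
qed simp_all

lemma degree_chebyshev: "degree (chebyshev k) = k"
  using degree_coeff_chebyshev[of k] le_degree[of "chebyshev k" k] by (auto split: if_splits)

lemma lead_coeff_chebyshev: "k > 0 \<Longrightarrow> lead_coeff (chebyshev k) = 2^(k-1)"
  using degree_coeff_chebyshev[of k] by (simp add: degree_chebyshev)

lemma abs_poly_chebyshev_le_1:
  assumes "\<bar>u\<bar> \<le> 1"
  shows "\<bar>poly (chebyshev k) u\<bar> \<le> 1"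
  using assms poly_chebyshev_cos[of k "arccos u"] by simp

definition chebyshev_nodes :: "nat \<Rightarrow> real set" where
  "chebyshev_nodes m = (\<lambda>i. cos (real (2*i+1) * pi / (2 * real m))) ` {..<m}"

lemma chebyshev_nodes:
  "finite (chebyshev_nodes m)" "card (chebyshev_nodes m) = m"
  "\<forall>u\<in>chebyshev_nodes m. \<bar>u\<bar> \<le> 1 \<and> poly (chebyshev m) u = 0"
proof -
  define \<theta> where "\<theta> i = real (2*i+1) * pi / (2 * real m)" for i
  have \<theta>: "0 \<le> \<theta> i \<and> \<theta> i \<le> pi" if "i < m" for i
  proof -
    have "real (2*i+1) * pi \<le> (2 * real m) * pi"
      using that by (intro mult_right_mono) auto
    then show ?thesis using that by (simp add: \<theta>_def divide_le_eq)
  qed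
  have "inj_on (\<lambda>i. cos (\<theta> i)) {..<m}"
  proof (rule inj_onI)
    fix i j assume "i \<in> {..<m}" "j \<in> {..<m}" "cos (\<theta> i) = cos (\<theta> j)"
    then have "\<theta> i = \<theta> j" using \<theta> by (intro cos_inj_pi[of "\<theta> i" "\<theta> j"]) (auto simp del: cos_inj_pi)
    then show "i = j" using \<open>i \<in> {..<m}\<close> by (simp add: \<theta>_def)
  qed
  then show "card (chebyshev_nodes m) = m"
    by (simp add: chebyshev_nodes_def card_image \<theta>_def)
  show "finite (chebyshev_nodes m)" by (simp add: chebyshev_nodes_def)
  have "poly (chebyshev m) (cos (\<theta> i)) = 0" if "i < m" for i
  proof -
    have "real m * \<theta> i = real (2*i+1) * (pi/2)" using that by (simp add: \<theta>_def field_simps)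
    moreover have "cos (real (2*i+1) * (pi/2)) = 0"
      unfolding cos_zero_iff by (intro disjI1 exI[of _ "2*i+1"]) simp
    ultimately show ?thesis by (simp only: poly_chebyshev_cos)
  qed
  then show "\<forall>u\<in>chebyshev_nodes m. \<bar>u\<bar> \<le> 1 \<and> poly (chebyshev m) u = 0"
    unfolding chebyshev_nodes_def \<theta>_def by auto
qed

definition chebyshev_on :: "real \<Rightarrow> real \<Rightarrow> nat \<Rightarrow> real poly" where
  "chebyshev_on a b m = pcompose (chebyshev m) [:-(a+b)/(b-a), 2/(b-a):]"

definition chebyshev_nodes_on :: "real \<Rightarrow> real \<Rightarrow> nat \<Rightarrow> real set" where
  "chebyshev_nodes_on a b m = (\<lambda>u. (a+b)/2 + (b-a)/2 * u) ` chebyshev_nodes m"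

lemma poly_chebyshev_on:
  "poly (chebyshev_on a b m) x = poly (chebyshev m) ((2*x - (a+b))/(b-a))"
proof -
  have "-(a+b)/(b-a) + x * (2/(b-a)) = (2*x - (a+b))/(b-a)"
    by (simp add: diff_divide_distrib add_divide_distrib algebra_simps)
  then show ?thesis by (simp add: chebyshev_on_def poly_pcompose)
qed

lemma degree_chebyshev_on: "a < b \<Longrightarrow> degree (chebyshev_on a b m) = m"
  by (simp add: chebyshev_on_def degree_pcompose degree_chebyshev)

lemma lead_coeff_chebyshev_on:
  assumes "a < b" "m > 0"
  shows "lead_coeff (chebyshev_on a b m) = (4/(b-a))^m / 2"
proof -
  have "lead_coeff (chebyshev_on a b m) = 2^(m-1) * (2/(b-a))^m"
    unfolding chebyshev_on_def using assms
    by (subst lead_coeff_comp)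
      (simp_all add: lead_coeff_chebyshev[of m, unfolded degree_chebyshev] degree_chebyshev)
  moreover have "(4/(b-a))^m = 2 * (2^(m-1) * (2/(b-a))^m)"
    using assms by (cases m) (simp_all flip: power_mult_distrib)
  ultimately show ?thesis by simp
qed

lemma abs_poly_chebyshev_on_le_1:
  assumes "a < b" "x \<in> {a..b}"
  shows "\<bar>poly (chebyshev_on a b m) x\<bar> \<le> 1"
proof -
  have "\<bar>(2*x - (a+b))/(b-a)\<bar> \<le> 1" using assms by (auto simp: abs_le_iff field_simps)
  then show ?thesis unfolding poly_chebyshev_on by (rule abs_poly_chebyshev_le_1)
qed

lemma chebyshev_nodes_on:
  fixes a b :: real
  assumes "a < b"
  shows "finite (chebyshev_nodes_on a b m)" "card (chebyshev_nodes_on a b m) = m"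
    "chebyshev_nodes_on a b m \<subseteq> {a..b}" "\<forall>x\<in>chebyshev_nodes_on a b m. poly (chebyshev_on a b m) x = 0"
proof -
  define \<phi> where "\<phi> u = (a+b)/2 + (b-a)/2 * u" for u
  have X: "chebyshev_nodes_on a b m = \<phi> ` chebyshev_nodes m"
    by (simp add: chebyshev_nodes_on_def \<phi>_def)
  have "inj \<phi>" using assms by (auto simp: \<phi>_def inj_def)
  then show "finite (chebyshev_nodes_on a b m)" "card (chebyshev_nodes_on a b m) = m"
    by (simp_all add: X chebyshev_nodes card_image inj_on_subset)
  have "\<phi> u \<in> {a..b}" if "\<bar>u\<bar> \<le> 1" for u
  proof -
    have "(b-a)/2 * u \<le> (b-a)/2 * 1" "(b-a)/2 * (-1) \<le> (b-a)/2 * u"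
      using that assms by (intro mult_left_mono; simp add: abs_le_iff)+
    then show ?thesis unfolding \<phi>_def by (auto simp: field_simps)
  qed
  then show "chebyshev_nodes_on a b m \<subseteq> {a..b}" using chebyshev_nodes(3) by (auto simp: X)
  have "(2 * \<phi> u - (a+b))/(b-a) = u" for u using assms by (simp add: \<phi>_def field_simps)
  then show "\<forall>x\<in>chebyshev_nodes_on a b m. poly (chebyshev_on a b m) x = 0"
    using chebyshev_nodes(3) by (auto simp: X poly_chebyshev_on)
qed

lemma chebyshev_interpolation_error:
  fixes F :: "nat \<Rightarrow> real \<Rightarrow> real"
  assumes "a < b" "m > 0"
    and der: "\<forall>k<m. \<forall>x\<in>{a..b}. (F k has_real_derivative F (Suc k) x) (at x)"
    and bound: "\<forall>y\<in>{a..b}. \<bar>F m y\<bar> \<le> B"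
  obtains P where "degree P < m" "\<forall>x\<in>{a..b}. \<bar>F 0 x - poly P x\<bar> \<le> 2 * B / fact m * ((b-a)/4)^m"
proof -
  define W where "W = chebyshev_on a b m"
  define X where "X = chebyshev_nodes_on a b m"
  have W: "degree W = m" "lead_coeff W = (4/(b-a))^m / 2" "\<forall>x\<in>{a..b}. \<bar>poly W x\<bar> \<le> 1"
    using degree_chebyshev_on[OF assms(1)] lead_coeff_chebyshev_on[OF assms(1,2)]
      abs_poly_chebyshev_on_le_1[OF assms(1)] assms(1) by (auto simp: W_def)
  have X: "finite X" "card X = m" "X \<subseteq> {a..b}" "\<forall>x\<in>X. poly W x = 0"
    using chebyshev_nodes_on[OF assms(1)] by (simp_all add: X_def W_def)
  define P where "P = lagrange_poly X (F 0)"
  have P: "degree P < m" "\<forall>z\<in>X. poly P z = F 0 z"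
    using degree_lagrange_poly[OF X(1), of "F 0"] X assms(2) by (auto simp: P_def poly_lagrange_poly)
  have "\<bar>F 0 x - poly P x\<bar> \<le> 2 * B / fact m * ((b-a)/4)^m" if x: "x \<in> {a..b}" for x
  proof -
    obtain \<xi> where \<xi>: "\<xi> \<in> {a..b}" "F 0 x - poly P x = F m \<xi> / (lead_coeff W * fact m) * poly W x"
      using interpolation_remainder[OF der X(1-3) P W(1) X(4) x] by blast
    have "B \<ge> 0" using bound x by (meson abs_ge_zero order_trans)
    have W_pos: "lead_coeff W > 0" unfolding W(2) using assms(1) by simp
    then have "\<bar>F 0 x - poly P x\<bar> = \<bar>F m \<xi>\<bar> / (lead_coeff W * fact m) * \<bar>poly W x\<bar>"
      by (simp add: \<xi>(2) abs_mult)
    also have "\<dots> \<le> B / (lead_coeff W * fact m) * 1"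
      using bound W(3) \<xi>(1) x \<open>B \<ge> 0\<close> W_pos by (intro mult_mono divide_right_mono) simp_all
    also have "\<dots> = 2 * B / fact m * ((b-a)/4)^m"
      by (simp add: W(2) power_divide mult_ac)
    finally show ?thesis .
  qed
  then show ?thesis using P(1) that by blast
qed

lemma integral_poly_pos:
  fixes p :: "real poly"
  assumes "a < b" "p \<noteq> 0" "\<forall>x\<in>{a..b}. poly p x \<ge> 0"
  shows "integral {a..b} (poly p) > 0"
proof -
  have cont: "continuous_on {a..b} (poly p)" by (intro continuous_intros)
  then have int: "poly p integrable_on {a..b}" by (rule integrable_continuous_real)
  have "integral {a..b} (poly p) \<noteq> 0"
  proof
    assume "integral {a..b} (poly p) = 0"
    then have hi: "(poly p has_integral 0) (cbox a b)"
      using int by (metis box_real(2) has_integral_integral)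
    have "poly p x = 0" if "x \<in> {a..b}" for x
      by (rule has_integral_0_cbox_imp_0[OF _ _ hi]) (use cont assms that in \<open>auto simp: box_real\<close>)
    then have "{a..b} \<subseteq> {x. poly p x = 0}" by blast
    then show False
      using poly_roots_finite[OF assms(2)] finite_subset infinite_Icc[OF assms(1)] by blast
  qed
  moreover have "integral {a..b} (poly p) \<ge> 0"
    using assms(3) int by (intro integral_nonneg) auto
  ultimately show ?thesis by simp
qed

lemma gauss_legendre_exact:
  "gauss_legendre a b n s w \<Longrightarrow> degree p \<le> 2 * n - 1 \<Longrightarrow>
    integral {a..b} (poly p) = (\<Sum>k = 1..n. w k * poly p (s k))"
  unfolding gauss_legendre_def by blast

definition squared_node_poly :: "nat \<Rightarrow> (nat \<Rightarrow> real) \<Rightarrow> nat \<Rightarrow> real poly" where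
  "squared_node_poly n s k = (\<Prod>i\<in>{1..n}-{k}. [:-s i, 1:]^2)"

lemma poly_squared_node_poly: "poly (squared_node_poly n s k) x = (\<Prod>i\<in>{1..n}-{k}. (x - s i)^2)"
  by (simp add: squared_node_poly_def poly_prod)

lemma squared_node_poly_nonneg: "poly (squared_node_poly n s k) x \<ge> 0"
  unfolding poly_squared_node_poly by (intro prod_nonneg) auto

lemma squared_node_poly_nonzero: "squared_node_poly n s k \<noteq> 0"
  unfolding squared_node_poly_def by (subst prod_zero_iff) auto

lemma degree_squared_node_poly:
  assumes "k \<in> {1..n}"
  shows "degree (squared_node_poly n s k) \<le> 2 * n - 2"
proof -
  have "degree (squared_node_poly n s k) \<le> (\<Sum>i\<in>{1..n}-{k}. degree ([:-s i, 1::real:]^2))"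
    unfolding squared_node_poly_def by (rule order_trans[OF degree_prod_sum_le]) auto
  also have "\<dots> \<le> (\<Sum>i\<in>{1..n}-{k}. 2)"
    proof (rule sum_mono)
    fix i show "degree ([:-s i, 1::real:]^2) \<le> 2"
      using degree_power_le[of "[:-s i, 1::real:]" 2] by simp
  qed
  also have "\<dots> = 2 * n - 2" using assms by simp
  finally show ?thesis .
qed

lemma squared_node_poly_at_node:
  "i \<in> {1..n} \<Longrightarrow> i \<noteq> k \<Longrightarrow> poly (squared_node_poly n s k) (s i) = 0"
  unfolding poly_squared_node_poly by (rule prod_zero) auto

lemma gauss_legendre_weight_pos:
  assumes gl: "gauss_legendre a b n s w" and "a < b" and k: "k \<in> {1..n}"
  shows "w k > 0"
proof -
  let ?Q = "squared_node_poly n s k"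
  have "integral {a..b} (poly ?Q) = (\<Sum>i = 1..n. w i * poly ?Q (s i))"
    using degree_squared_node_poly[OF k, of s] by (intro gauss_legendre_exact[OF gl]) linarith
  also have "\<dots> = w k * poly ?Q (s k)"
    using k by (intro sum.remove[THEN trans]) (auto simp: squared_node_poly_at_node)
  finally have "w k * poly ?Q (s k) > 0"
    using assms squared_node_poly_nonzero squared_node_poly_nonneg by (metis integral_poly_pos)
  then show ?thesis using squared_node_poly_nonneg[of n s k "s k"] by (simp add: zero_less_mult_iff)
qed

lemma gauss_legendre_node_in_interval:
  assumes gl: "gauss_legendre a b n s w" and "a < b" and k: "k \<in> {1..n}"
  shows "s k \<in> {a..b}"
proof (rule ccontr)
  assume out: "s k \<notin> {a..b}"
  define c :: real where "c = (if s k < a then 1 else -1)"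
  define R where "R = smult c ([:-s k, 1:] * squared_node_poly n s k)"
  \<comment> \<open>\<open>R\<close> vanishes at all nodes but has constant sign on \<open>[a,b]\<close>, so the rule cannot integrate it.\<close>
  have "[:-s k, 1:] * squared_node_poly n s k \<noteq> 0"
    using squared_node_poly_nonzero by (metis mult_eq_0_iff pCons_eq_0_iff zero_neq_one)
  then have "R \<noteq> 0" unfolding R_def c_def smult_eq_0_iff by simp
  moreover have "\<forall>x\<in>{a..b}. poly R x \<ge> 0"
  proof
    fix x assume "x \<in> {a..b}"
    then have "c * (x - s k) \<ge> 0" using out by (auto simp: c_def)
    moreover have "poly R x = c * (x - s k) * poly (squared_node_poly n s k) x"
      by (simp add: R_def algebra_simps)
    ultimately show "poly R x \<ge> 0" by (simp add: squared_node_poly_nonneg)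
  qed
  ultimately have "integral {a..b} (poly R) > 0" by (rule integral_poly_pos[OF assms(2)])
  moreover have "degree R \<le> 2 * n - 1"
  proof -
    have "degree R \<le> 1 + degree (squared_node_poly n s k)"
      unfolding R_def by (rule order_trans[OF degree_smult_le order_trans[OF degree_mult_le]]) simp
    then show ?thesis using degree_squared_node_poly[OF k, of s] k by auto
  qed
  then have "integral {a..b} (poly R) = (\<Sum>i = 1..n. w i * poly R (s i))"
    by (rule gauss_legendre_exact[OF gl])
  moreover have "poly R (s i) = 0" if "i \<in> {1..n}" for i
    using that by (cases "i = k") (auto simp: R_def squared_node_poly_at_node)
  ultimately show False by simp
qed

lemma gauss_legendre_weight_sum:
  assumes "gauss_legendre a b n s w" "a < b" "n \<ge> 1"
  shows "(\<Sum>k = 1..n. w k) = b - a"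
proof -
  have "poly (1 :: real poly) = (\<lambda>_. 1)" by auto
  then show ?thesis using gauss_legendre_exact[OF assms(1), of 1] assms(2,3) by simp
qed

lemma gauss_legendre_error_le:
  assumes gl: "gauss_legendre a b n s w" and ab: "a < b" and n: "n \<ge> 1"
    and f: "continuous_on {a..b} f" and P: "degree P \<le> 2 * n - 1"
    and E: "\<forall>x\<in>{a..b}. \<bar>f x - poly P x\<bar> \<le> E"
  shows "\<bar>integral {a..b} f - (\<Sum>k = 1..n. w k * f (s k))\<bar> \<le> 2 * E * (b - a)"
proof -
  have intP: "poly P integrable_on {a..b}"
    by (intro integrable_continuous_real continuous_intros)
  have intf: "f integrable_on {a..b}" using f by (rule integrable_continuous_real)
  have "continuous_on {a..b} (\<lambda>x. f x - poly P x)" using f by (intro continuous_intros)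
  moreover have "norm (f x - poly P x) \<le> E" if "x \<in> {a..b}" for x using E that by simp
  ultimately have "norm (integral {a..b} (\<lambda>x. f x - poly P x)) \<le> E * (b - a)"
    by (rule integral_bound[OF less_imp_le[OF ab]])
  then have "\<bar>integral {a..b} (\<lambda>x. f x - poly P x)\<bar> \<le> E * (b - a)" by simp
  moreover have "\<bar>\<Sum>k = 1..n. w k * (f (s k) - poly P (s k))\<bar> \<le> E * (b - a)"
  proof -
    have "\<bar>\<Sum>k = 1..n. w k * (f (s k) - poly P (s k))\<bar> \<le> (\<Sum>k = 1..n. w k * E)"
    proof (rule order_trans[OF sum_abs sum_mono])
      fix k assume k: "k \<in> {1..n}"
      then show "\<bar>w k * (f (s k) - poly P (s k))\<bar> \<le> w k * E"
        using gauss_legendre_weight_pos[OF gl ab k] E gauss_legendre_node_in_interval[OF gl ab k]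
        by (simp add: abs_mult)
    qed
    also have "\<dots> = E * (b - a)"
      using gauss_legendre_weight_sum[OF gl ab n] by (simp add: sum_distrib_right[symmetric])
    finally show ?thesis .
  qed
  moreover have "integral {a..b} f - (\<Sum>k = 1..n. w k * f (s k))
      = integral {a..b} (\<lambda>x. f x - poly P x) - (\<Sum>k = 1..n. w k * (f (s k) - poly P (s k)))"
    by (simp add: integral_diff[OF intf intP] gauss_legendre_exact[OF gl P] right_diff_distrib
        sum_subtractf)
  ultimately show ?thesis by linarith
qed

lemma exp_powr_polynomial_approximation:
  assumes "0 < a" "a < b" "m > 0" "\<bar>g\<bar> \<le> 1" "t \<ge> 0"
  obtains P where "degree P < m"
    "\<forall>x\<in>{a..b}. \<bar>exp (-t*x) * x powr g - poly P x\<bar> \<le> 2 * a powr (g - real m) * ((b-a)/4)^m"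
proof -
  have "\<forall>k<m. \<forall>x\<in>{a..b}. (exp_powr_deriv t g k has_real_derivative exp_powr_deriv t g (Suc k) x) (at x)"
    using assms(1) by (auto intro!: exp_powr_deriv_has_real_derivative)
  moreover have "\<forall>y\<in>{a..b}. \<bar>exp_powr_deriv t g m y\<bar> \<le> fact m * a powr (g - real m)"
  proof
    fix y assume y: "y \<in> {a..b}"
    have "\<bar>exp_powr_deriv t g m y\<bar> \<le> fact m * y powr (g - real m)"
      using y assms by (intro abs_exp_powr_deriv_le) auto
    also have "\<dots> \<le> fact m * a powr (g - real m)"
      using y assms by (intro mult_left_mono powr_mono2') auto
    finally show "\<bar>exp_powr_deriv t g m y\<bar> \<le> fact m * a powr (g - real m)" .
  qed
  ultimately obtain P where "degree P < m" "\<forall>x\<in>{a..b}. \<bar>exp_powr_deriv t g 0 x - poly P x\<bar>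
      \<le> 2 * (fact m * a powr (g - real m)) / fact m * ((b-a)/4)^m"
    using chebyshev_interpolation_error[OF assms(2,3)] by blast
  then show ?thesis by (intro that) (auto simp: exp_powr_deriv_0)
qed

lemma four_less_error_constant:
  assumes "1 < \<beta>" "n > 1"
  shows "4 < 2 powr (\<beta> - 3/2) * pi * exp (1 / exp 1) ^ (2 * n)"
proof -
  have "sqrt 2 < 3/2"
    by (rule real_less_lsqrt) (auto simp: power2_eq_square)
  then have "2/3 < inverse (sqrt 2)" by (simp add: field_simps)
  also have "inverse (sqrt 2) = 2 powr (-1/2)"
    by (simp add: powr_minus powr_half_sqrt[symmetric])
  also have "\<dots> \<le> 2 powr (\<beta> - 3/2)"
    using assms by (intro powr_mono) auto
  finally have powr_gt: "2/3 < 2 powr (\<beta> - 3/2)" .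
  have "4/3 \<le> 4 / exp (1::real)" using exp_le by (simp add: field_simps)
  then have "exp (4/3) \<le> exp (4 / exp (1::real))" by simp
  then have "2 < exp (4 / exp (1::real))"
    using exp_ge_add_one_self[of "4/3::real"] by linarith
  also have "exp (4 / exp 1) = exp (1 / exp (1::real)) ^ 4"
    using exp_of_nat_mult[of 4 "1 / exp (1::real)"] by simp
  also have "\<dots> \<le> exp (1 / exp 1) ^ (2 * n)"
    using assms by (intro power_increasing) auto
  finally have exp_gt: "2 < exp (1 / exp (1::real)) ^ (2 * n)" .
  have "(2/3) * 3 * 2 < 2 powr (\<beta> - 3/2) * pi * exp (1 / exp 1) ^ (2 * n)"
    using powr_gt exp_gt pi_gt3 by (intro mult_strict_mono) auto
  then show ?thesis by simp
qed

theorem lemma2p3: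
  fixes j :: int and n :: nat and s w :: "nat \<Rightarrow> real" and a b \<beta> t :: real
  assumes "a = 2 powi j" and "b = 2 powi (j + 1)"
    and "n > 1"
    and "gauss_legendre a b n s w"
    and "1 < \<beta>" and "\<beta> < 2"
    and "t > 0"
  shows "\<bar>integral {a..b} (\<lambda>x. exp (- t * x) * x powr (\<beta> - 1))
            - (\<Sum>k = 1..n. w k * s k powr (\<beta> - 1) * exp (- s k * t))\<bar>
         < 2 powr (\<beta> - 3/2) * pi * a powr \<beta> * (exp (1 / exp 1) / 4) ^ (2 * n)"
proof -
  define g where "g = \<beta> - 1"
  define E where "E = 2 * a powr (g - real (2*n)) * ((b-a)/4)^(2*n)"
  have a: "a > 0" and b: "b = 2 * a" using assms(1,2) by (simp_all add: power_int_add)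
  obtain P where P: "degree P < 2 * n" "\<forall>x\<in>{a..b}. \<bar>exp (-t*x) * x powr g - poly P x\<bar> \<le> E"
    using exp_powr_polynomial_approximation[of a b "2*n" g t] a b assms(3,5,6,7)
    unfolding E_def g_def by auto
  have "continuous_on {a..b} (\<lambda>x. exp (-t*x) * x powr g)"
    using a by (intro continuous_intros) auto
  from gauss_legendre_error_le[OF assms(4) _ _ this _ P(2)] a b assms(3) P(1)
  have "\<bar>integral {a..b} (\<lambda>x. exp (-t*x) * x powr g) - (\<Sum>k = 1..n. w k * (exp (-t * s k) * s k powr g))\<bar>
      \<le> 2 * E * (b - a)" by auto
  also have "2 * E * (b - a) = 4 * (a powr (g - real (2*n)) * a^(2*n) * a) / 16^n"
    unfolding E_def b by (simp add: power_divide power_mult)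
  also have "\<dots> = 4 * a powr \<beta> / 16^n"
    using a powr_add[of a g 1] powr_realpow[OF a, of "2*n"] by (simp add: powr_diff g_def)
  also have "\<dots> < 2 powr (\<beta> - 3/2) * pi * a powr \<beta> * (exp (1 / exp 1) / 4) ^ (2 * n)"
    using four_less_error_constant[OF assms(5,3)] a
    by (simp add: power_divide power_mult divide_strict_right_mono)
  finally show ?thesis by (simp add: g_def mult_ac)
qed

end
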